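(* Let $n\ge 1$ and $a_i=F_{i+2}-i-2$. For every game path of the Zeckendorf game on $n$ starting from $\{F_1^n\}$, if $MC_i$ denotes the number of moves of type $C_i$ ($i\ge 2$) in the path, then the length of the path equals $$\sum_{i=1}^{i_{\max}(n)} a_i\,\delta_i\;-\;\sum_{i\ge 2}(i-1)\,MC_i .$$ In particular, a game path attains length exactly $\sum_{i} a_i\delta_i$ if and only if it uses no moves $C_i$ with $i\ge 2$ (i.e. only splitting moves and $C_1$).
   Context: Fibonacci numbers are indexed by $F_1=1$, $F_2=2$, $F_{i+1}=F_i+F_{i-1}$. A game state is a finite multiset of Fibonacci numbers (tracked by index); $\{F_1^n\}$ denotes $n$ copies of $F_1$. The legal moves are: $C_1$: replace $F_1,F_1$ by $F_2$; for $i\ge 2$, $C_i$: replace $F_{i-1},F_i$ by $F_{i+1}$; $S_2$: replace $F_2,F_2$ by $F_1,F_3$; for $i\ge 3$, $S_i$: replace $F_i,F_i$ by $F_{i-2},F_{i+1}$. The game on $n$ starts at $\{F_1^n\}$ and a game path is a sequence of legal moves continued until no legal move is available, which happens exactly at the Zeckendorf decomposition of $n$ (the unique representation of $n$ as a sum of $F_i$'s with distinct, pairwise non-consecutive indices); the length of a path is its number of moves. Write the Zeckendorf decomposition as $n=\sum_{i=1}^{i_{\max}(n)}\delta_i F_i$ with $\delta_i\in\{0,1\}$ and $i_{\max}(n)$ the largest index occurring. *)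

theory Defs
  imports Main "HOL-Library.Multiset"
begin

text \<open>Fibonacci numbers with F 1 = 1, F 2 = 2, F (i+1) = F i + F (i-1).
  The value at index 0 is an unused auxiliary value (chosen so the recursion is uniform).\<close>
fun F :: "nat \<Rightarrow> nat" where
  "F 0 = 1"
| "F (Suc 0) = 1"
| "F (Suc (Suc k)) = F (Suc k) + F k"

definition zeck_rep :: "nat \<Rightarrow> nat set \<Rightarrow> bool" where
  "zeck_rep n S \<longleftrightarrow> finite S \<and> 0 \<notin> S \<and> (\<forall>i\<in>S. Suc i \<notin> S) \<and> (\<Sum>i\<in>S. F i) = n"

definition zeck :: "nat \<Rightarrow> nat set" where
  "zeck n = (THE S. zeck_rep n S)"

definition delta :: "nat \<Rightarrow> nat \<Rightarrow> int" where
  "delta n i = (if i \<in> zeck n then 1 else 0)"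

definition imax :: "nat \<Rightarrow> nat" where
  "imax n = Max (zeck n)"

definition a :: "nat \<Rightarrow> int" where
  "a i = int (F (i + 2)) - int i - 2"

text \<open>Moves: Comb i is C_i, Split i is S_i. Game states are multisets of indices.\<close>
datatype move = Comb nat | Split nat

definition step :: "move \<Rightarrow> nat multiset \<Rightarrow> nat multiset option" where
  "step m s = (case m of
      Comb i \<Rightarrow>
        (if i = 1 then
           (if count s 1 \<ge> 2 then Some (s - {#1, 1#} + {#2#}) else None)
         else if i \<ge> 2 then
           (if count s (i - 1) \<ge> 1 \<and> count s i \<ge> 1
            then Some (s - {#i - 1, i#} + {#i + 1#}) else None)
         else None)
    | Split i \<Rightarrow>
        (if i = 2 then
           (if count s 2 \<ge> 2 then Some (s - {#2, 2#} + {#1, 3#}) else None)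
         else if i \<ge> 3 then
           (if count s i \<ge> 2 then Some (s - {#i, i#} + {#i - 2, i + 1#}) else None)
         else None))"

fun run :: "move list \<Rightarrow> nat multiset \<Rightarrow> nat multiset option" where
  "run [] s = Some s"
| "run (m # ms) s = (case step m s of None \<Rightarrow> None | Some s' \<Rightarrow> run ms s')"

definition game_path :: "nat \<Rightarrow> move list \<Rightarrow> bool" where
  "game_path n p \<longleftrightarrow>
     (\<exists>s. run p (replicate_mset n 1) = Some s \<and> (\<forall>m. step m s = None))"

definition MC :: "move list \<Rightarrow> nat \<Rightarrow> nat" where
  "MC p i = count (mset p) (Comb i)"

end

theory Submission
  imports Defs
begin

text \<open>The value \<open>\<Sum>F\<^sub>i\<close> of the state is invariant,
  since every move is an instance of the Fibonacci recursion. The potential \<open>\<Sum>a\<^sub>i\<close> grows by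
  exactly \<open>1\<close> per move, plus \<open>i - 1\<close> extra for each move \<open>C\<^sub>i\<close>. It starts at \<open>n \<cdot> a\<^sub>1 = 0\<close>,
  and the final state, in which no move is legal, has no repeated and no consecutive indices,
  so it is the Zeckendorf decomposition of \<open>n\<close> and its potential is \<open>\<Sum>a\<^sub>i\<delta>\<^sub>i\<close>.\<close>

lemma F_neq_0 [simp]: "F i \<noteq> 0"
  by (induction i rule: F.induct) auto

lemma F_mono: "i \<le> j \<Longrightarrow> F i \<le> F j"
proof (rule lift_Suc_mono_le[of F])
  show "F k \<le> F (Suc k)" for k by (cases k) auto
qed

lemma sum_F_less_F:
  assumes "finite S" "0 \<notin> S" "\<forall>i\<in>S. Suc i \<notin> S" "S \<subseteq> {..<k}"
  shows "sum F S < F k"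
  using assms
proof (induction k arbitrary: S rule: F.induct)
  case 1
  then show ?case by simp
next
  case 2
  then have "S = {}" by auto
  then show ?case by simp
next
  case (3 k)
  show ?case
  proof (cases "Suc k \<in> S")
    case True
    then have "k \<notin> S"
      using "3.prems"(3) by auto
    then have "S - {Suc k} \<subseteq> {..<k}"
      using "3.prems"(4) by (auto simp: less_Suc_eq)
    then have "sum F (S - {Suc k}) < F k"
      using "3.IH"(2) "3.prems" by auto
    then show ?thesis
      using True "3.prems"(1) by (simp add: sum.remove)
  next
    case False
    then have "S \<subseteq> {..<Suc k}"
      using "3.prems"(4) by (auto simp: less_Suc_eq)
    then show ?thesis
      using "3.IH"(1) "3.prems" by fastforce
  qed
qed

lemma sum_F_bounds:
  assumes "finite S" "0 \<notin> S" "\<forall>i\<in>S. Suc i \<notin> S" "S \<noteq> {}"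
  shows "F (Max S) \<le> sum F S" "sum F S < F (Suc (Max S))"
proof -
  show "F (Max S) \<le> sum F S"
    using assms by (intro member_le_sum) auto
  have "S \<subseteq> {..<Suc (Max S)}"
    using assms(1) by (auto simp: less_Suc_eq_le)
  then show "sum F S < F (Suc (Max S))"
    using sum_F_less_F assms(1-3) by blast
qed

lemma zeck_rep_Max_eq:
  assumes "zeck_rep n S" "zeck_rep n T" "S \<noteq> {}" "T \<noteq> {}"
  shows "Max S = Max T"
proof -
  have less: False if "zeck_rep n A" "zeck_rep n B" "A \<noteq> {}" "B \<noteq> {}" "Max A < Max B"
    for A B
  proof -
    have "n < F (Suc (Max A))"
      using that(1,3) sum_F_bounds(2)[of A] by (auto simp: zeck_rep_def)
    also have "\<dots> \<le> F (Max B)"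
      using that(5) by (intro F_mono) simp
    also have "\<dots> \<le> n"
      using that(2,4) sum_F_bounds(1)[of B] by (auto simp: zeck_rep_def)
    finally show False by simp
  qed
  show ?thesis
    using less[of S T] less[of T S] assms by (meson linorder_neqE_nat)
qed

lemma zeck_rep_unique:
  "zeck_rep n S \<Longrightarrow> zeck_rep n T \<Longrightarrow> S = T"
proof (induction n arbitrary: S T rule: less_induct)
  case (less n)
  show ?case
  proof (cases "S = {} \<or> T = {}")
    case True
    then have "n = 0"
      using less.prems by (auto simp: zeck_rep_def)
    then have "S = {}" "T = {}"
      using less.prems by (auto simp: zeck_rep_def)
    then show ?thesis
      by simp
  next
    case False
    define m where "m = Max S"
    have fin: "finite S" "finite T"
      using less.prems by (simp_all add: zeck_rep_def)
    have "m = Max T"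
      using False zeck_rep_Max_eq[OF less.prems] by (simp add: m_def)
    then have m: "m \<in> S" "m \<in> T"
      using False fin m_def by (metis Max_in)+
    have "F m \<le> n"
      using m less.prems by (auto simp: zeck_rep_def intro: member_le_sum)
    then have "n - F m < n"
      using F_neq_0[of m] by linarith
    moreover have "zeck_rep (n - F m) (S - {m})" "zeck_rep (n - F m) (T - {m})"
      using less.prems m by (auto simp: zeck_rep_def sum_diff1_nat)
    ultimately have "S - {m} = T - {m}"
      using less.IH by blast
    then show ?thesis
      using m by (metis insert_Diff)
  qed
qed

lemma zeck_eqI: "zeck_rep n S \<Longrightarrow> zeck n = S"
  unfolding zeck_def by (metis the_equality zeck_rep_unique)

lemma step_SomeE:
  assumes "step m s = Some s'"
  obtains (C1) r where "m = Comb 1" "s = {#1, 1#} + r" "s' = {#2#} + r"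
  | (C) i r where "m = Comb (Suc (Suc i))" "s = {#Suc i, Suc (Suc i)#} + r"
      "s' = {#Suc (Suc (Suc i))#} + r"
  | (S2) r where "m = Split 2" "s = {#2, 2#} + r" "s' = {#1, 3#} + r"
  | (S) i r where "m = Split (Suc (Suc (Suc i)))"
      "s = {#Suc (Suc (Suc i)), Suc (Suc (Suc i))#} + r" "s' = {#Suc i, Suc (Suc (Suc (Suc i)))#} + r"
proof -
  have split_off: "s = N + (s - N)" if "N \<subseteq># s" for N
    using that by (simp add: subset_mset.add_diff_inverse)
  show thesis
  proof (cases m)
    case (Comb i)
    consider "i = 1" | j where "i = Suc (Suc j)"
    proof -
      have "1 \<le> i"
        using assms Comb by (auto simp: step_def split: if_splits)
      then show thesis
        using that(1) that(2)[of "i - 2"] by (cases "i = 1") auto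
    qed
    then show thesis
    proof cases
      case 1
      then have "{#1, 1#} \<subseteq># s" "s' = {#2#} + (s - {#1, 1#})"
        using assms Comb by (auto simp: step_def subseteq_mset_def split: if_splits)
      then show thesis
        using C1 split_off Comb 1 by blast
    next
      case 2
      then have "{#Suc j, Suc (Suc j)#} \<subseteq># s"
          "s' = {#Suc (Suc (Suc j))#} + (s - {#Suc j, Suc (Suc j)#})"
        using assms Comb by (auto simp: step_def subseteq_mset_def split: if_splits)
      then show thesis
        using C split_off Comb 2 by blast
    qed
  next
    case (Split i)
    consider "i = 2" | j where "i = Suc (Suc (Suc j))"
    proof -
      have "2 \<le> i"
        using assms Split by (auto simp: step_def split: if_splits)
      then show thesis
        using that(1) that(2)[of "i - 3"] by (cases "i = 2") auto
    qed
    then show thesis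
    proof cases
      case 1
      then have "{#2, 2#} \<subseteq># s" "s' = {#1, 3#} + (s - {#2, 2#})"
        using assms Split by (auto simp: step_def subseteq_mset_def split: if_splits)
      then show thesis
        using S2 split_off Split 1 by blast
    next
      case 2
      then have "{#i, i#} \<subseteq># s" "s' = {#Suc j, Suc i#} + (s - {#i, i#})"
        using assms Split by (auto simp: step_def subseteq_mset_def split: if_splits)
      then show thesis
        using S split_off Split 2 by blast
    qed
  qed
qed

definition excess :: "move \<Rightarrow> nat" where
  "excess m = (case m of Comb i \<Rightarrow> i - 1 | Split i \<Rightarrow> 0)"

lemma step_preserves_value:
  "step m s = Some s' \<Longrightarrow> (\<Sum>i\<in>#s'. F i) = (\<Sum>i\<in>#s. F i)"
  by (erule step_SomeE) (simp_all add: eval_nat_numeral)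

lemma step_potential:
  "step m s = Some s' \<Longrightarrow> (\<Sum>i\<in>#s'. a i) = (\<Sum>i\<in>#s. a i) + 1 + int (excess m)"
  by (erule step_SomeE) (simp_all add: a_def excess_def eval_nat_numeral)

lemma step_zero_notin:
  "step m s = Some s' \<Longrightarrow> 0 \<notin># s \<Longrightarrow> 0 \<notin># s'"
  by (erule step_SomeE) simp_all

lemma run_invariant:
  assumes "run p s = Some s'" "P s"
    and "\<And>m t t'. step m t = Some t' \<Longrightarrow> P t \<Longrightarrow> P t'"
  shows "P s'"
  using assms(1,2)
proof (induction p arbitrary: s)
  case (Cons m p)
  then show ?case
    using assms(3) by (auto split: option.splits)
qed simp

lemma run_additive:
  fixes f :: "nat multiset \<Rightarrow> 'b::comm_monoid_add"
  assumes "run p s = Some s'"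
    and "\<And>m t t'. step m t = Some t' \<Longrightarrow> f t' = f t + g m"
  shows "f s' = f s + (\<Sum>m\<leftarrow>p. g m)"
  using assms(1)
proof (induction p arbitrary: s)
  case (Cons m p)
  then obtain t where "step m s = Some t" "run p t = Some s'"
    by (auto split: option.splits)
  then show ?case
    using Cons.IH assms(2) by (simp add: add.assoc)
qed simp

lemma stuck_count_le_1:
  assumes "\<forall>m. step m s = None" "0 \<notin># s"
  shows "count s i \<le> 1"
proof -
  consider "i = 0" | "i = 1" | "i = 2" | "3 \<le> i"
    by linarith
  then show ?thesis
  proof cases
    case 1
    then show ?thesis
      using assms(2) by (simp add: not_in_iff)
  next
    case 2
    then show ?thesis
      using assms(1)[rule_format, of "Comb 1"] by (auto simp: step_def split: if_splits)
  next
    case 3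
    then show ?thesis
      using assms(1)[rule_format, of "Split 2"] by (auto simp: step_def split: if_splits)
  next
    case 4
    then show ?thesis
      using assms(1)[rule_format, of "Split i"] by (auto simp: step_def split: if_splits)
  qed
qed

lemma stuck_not_consecutive:
  assumes "\<forall>m. step m s = None" "0 \<notin># s" "i \<in># s"
  shows "Suc i \<notin># s"
  using assms(1)[rule_format, of "Comb (Suc i)"] assms(2,3)
  by (cases i) (auto simp: step_def split: if_splits)

lemma stuck_zeck_rep:
  assumes "\<forall>m. step m s = None" "0 \<notin># s"
  shows "zeck_rep (\<Sum>i\<in>#s. F i) (set_mset s)" "mset_set (set_mset s) = s"
proof -
  show "mset_set (set_mset s) = s"
  proof (rule multiset_eqI)
    fix i
    show "count (mset_set (set_mset s)) i = count s i"
      using stuck_count_le_1[OF assms, of i]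
      by (cases "i \<in># s") (auto simp: not_in_iff le_Suc_eq dest: not_in_iff[THEN iffD2])
  qed
  then show "zeck_rep (\<Sum>i\<in>#s. F i) (set_mset s)"
    using stuck_not_consecutive[OF assms] assms(2)
    by (auto simp: zeck_rep_def sum_unfold_sum_mset)
qed

lemma game_path_final_state:
  assumes "game_path n p"
  obtains Z where "zeck_rep n Z" "sum a Z = int (length p) + int (\<Sum>m\<leftarrow>p. excess m)"
proof -
  obtain s where run: "run p (replicate_mset n 1) = Some s" and stuck: "\<forall>m. step m s = None"
    using assms unfolding game_path_def by blast
  have "0 \<notin># s"
    using run_invariant[OF run, of "\<lambda>t. 0 \<notin># t"] step_zero_notin by auto
  note Z = stuck_zeck_rep[OF stuck this]
  have "a 1 = 0"
    by (simp add: a_def eval_nat_numeral)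
  have moves: "(\<Sum>m\<leftarrow>p. 1 + int (excess m)) = int (length p) + int (\<Sum>m\<leftarrow>p. excess m)"
    by (induction p) simp_all
  have "(\<Sum>i\<in>#s. F i) = n"
    using run_additive[OF run, of "\<lambda>t. \<Sum>i\<in>#t. F i" "\<lambda>_. 0"] step_preserves_value by simp
  moreover have "(\<Sum>i\<in>#s. a i) = int (length p) + int (\<Sum>m\<leftarrow>p. excess m)"
    using run_additive[OF run, of "\<lambda>t. \<Sum>i\<in>#t. a i" "\<lambda>m. 1 + int (excess m)"]
      step_potential \<open>a 1 = 0\<close> moves
    by simp
  ultimately show thesis
    using that[of "set_mset s"] Z by (metis sum_unfold_sum_mset)
qed

lemma sum_delta_eq_sum_zeck:
  fixes f :: "nat \<Rightarrow> int"
  assumes "zeck_rep n S" "n \<noteq> 0"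
  shows "(\<Sum>i=1..imax n. f i * delta n i) = sum f S"
proof -
  have S: "zeck n = S" "finite S" "0 \<notin> S" "S \<noteq> {}"
    using assms zeck_eqI[OF assms(1)] by (auto simp: zeck_rep_def)
  then have "S \<subseteq> {1..imax n}"
    by (auto simp: imax_def Suc_le_eq gr0I)
  have "(\<Sum>i=1..imax n. f i * delta n i) = (\<Sum>i\<in>{1..imax n}. if i \<in> S then f i else 0)"
    by (intro sum.cong) (auto simp: delta_def S(1))
  also have "\<dots> = sum f S"
    using \<open>S \<subseteq> {1..imax n}\<close> by (simp add: Int_absorb1 flip: sum.inter_restrict)
  finally show ?thesis .
qed

lemma sum_list_excess:
  "(\<Sum>m\<leftarrow>p. excess m) = (\<Sum>i\<in>{i. 2 \<le> i \<and> MC p i > 0}. (i - 1) * MC p i)"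
proof -
  define B where "B = {i. 2 \<le> i \<and> MC p i > 0}"
  have "B \<subseteq> Comb -` set p"
    by (auto simp: B_def MC_def)
  then have "finite B"
    by (rule finite_subset) (simp add: finite_vimageI inj_def)
  have "(\<Sum>m\<leftarrow>p. excess m) = (\<Sum>m\<in>set p. count_list p m * excess m)"
    by (rule sum_list_map_eq_sum_count)
  also have "\<dots> = (\<Sum>m\<in>Comb ` B. count_list p m * excess m)"
    using \<open>B \<subseteq> Comb -` set p\<close>
    by (intro sum.mono_neutral_right)
      (auto simp: B_def MC_def excess_def count_mset split: move.splits)
  also have "\<dots> = (\<Sum>i\<in>B. (i - 1) * MC p i)"
    by (simp add: sum.reindex inj_on_def MC_def count_mset excess_def mult.commute)
  finally show ?thesis
    by (simp add: B_def)
qed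

lemma sum_list_excess_eq_0_iff:
  "(\<Sum>m\<leftarrow>p. excess m) = 0 \<longleftrightarrow> (\<forall>i\<ge>2. MC p i = 0)"
  by (auto simp: MC_def excess_def split: move.splits) (metis One_nat_def Suc_1 not_less_eq_eq)

theorem mainTheorem6:
  fixes n :: nat and p :: "move list"
  assumes "n \<ge> 1" and "game_path n p"
  shows "int (length p) =
           (\<Sum>i=1..imax n. a i * delta n i)
           - (\<Sum>i\<in>{i. 2 \<le> i \<and> MC p i > 0}. int (i - 1) * int (MC p i))
         \<and> (int (length p) = (\<Sum>i=1..imax n. a i * delta n i)
           \<longleftrightarrow> (\<forall>i\<ge>2. MC p i = 0))"
proof -
  obtain Z where Z: "zeck_rep n Z" "sum a Z = int (length p) + int (\<Sum>m\<leftarrow>p. excess m)"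
    using game_path_final_state[OF assms(2)] .
  have "(\<Sum>i=1..imax n. a i * delta n i) = int (length p) + int (\<Sum>m\<leftarrow>p. excess m)"
    using sum_delta_eq_sum_zeck[OF Z(1)] assms(1) Z(2) by simp
  moreover have "int (\<Sum>m\<leftarrow>p. excess m)
      = (\<Sum>i\<in>{i. 2 \<le> i \<and> MC p i > 0}. int (i - 1) * int (MC p i))"
    unfolding sum_list_excess by simp
  ultimately show ?thesis
    using sum_list_excess_eq_0_iff by auto
qed

end
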